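(* Let $(\mathcal{E},\mathcal{M})$ be a stable orthogonal factorization system on a category $\mathcal{D}$ with pullbacks, and let $\mathcal{A}$ be a category with a terminal object $1$. Let $(\mathcal{E}',\mathcal{M}')$ be the factorization system on $[\mathcal{A},\mathcal{D}]$ where $\mathcal{E}'$ consists of the natural transformations $e$ with $e_1\in\mathcal{E}$ and $\mathcal{M}'$ consists of the cartesian natural transformations $m$ with $m_1\in\mathcal{M}$. Then $(\mathcal{E}',\mathcal{M}')$ and the componentwise lifting of $(\mathcal{E},\mathcal{M})$ to $[\mathcal{A},\mathcal{D}]$ both restrict to the same factorization system on $\mathrm{CartNt}[\mathcal{A},\mathcal{D}]$, the category of all functors $\mathcal{A}\to\mathcal{D}$ and cartesian natural transformations.
   Context: An orthogonal factorization system $(\mathcal{E},\mathcal{M})$: both classes contain all isomorphisms and are closed under composition; each commuting square $g\circ e = m\circ f$ with $e\in\mathcal{E}$, $m\in\mathcal{M}$ has a unique diagonal; every morphism factors as $m\circ e$ with $e\in\mathcal{E}$, $m\in\mathcal{M}$. It is stable if $\mathcal{E}$ is closed under pullback along arbitrary morphisms. A natural transformation is cartesian if all its naturality squares are pullbacks. The componentwise lifting consists of the natural transformations all of whose components lie in $\mathcal{E}$, respectively in $\mathcal{M}$. Restricting a factorization system to $\mathrm{CartNt}[\mathcal{A},\mathcal{D}]$ means intersecting both classes with the cartesian natural transformations. *)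

theory Defs
  imports Main
begin

record ('o,'a) cat =
  Obj :: "'o set"
  Arr :: "'a set"
  Dom :: "'a \<Rightarrow> 'o"
  Cod :: "'a \<Rightarrow> 'o"
  Id  :: "'o \<Rightarrow> 'a"
  Comp :: "'a \<Rightarrow> 'a \<Rightarrow> 'a"   (* Comp C g f = g \<circ> f *)

definition hom :: "('o,'a,'z) cat_scheme \<Rightarrow> 'o \<Rightarrow> 'o \<Rightarrow> 'a set" where
  "hom C x y = {f \<in> Arr C. Dom C f = x \<and> Cod C f = y}"

definition category :: "('o,'a,'z) cat_scheme \<Rightarrow> bool" where
  "category C \<longleftrightarrow>
     (\<forall>f\<in>Arr C. Dom C f \<in> Obj C \<and> Cod C f \<in> Obj C) \<and>
     (\<forall>x\<in>Obj C. Id C x \<in> hom C x x) \<and>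
     (\<forall>f\<in>Arr C. \<forall>g\<in>Arr C. Cod C f = Dom C g \<longrightarrow>
         Comp C g f \<in> hom C (Dom C f) (Cod C g)) \<and>
     (\<forall>f\<in>Arr C. Comp C f (Id C (Dom C f)) = f \<and> Comp C (Id C (Cod C f)) f = f) \<and>
     (\<forall>f\<in>Arr C. \<forall>g\<in>Arr C. \<forall>h\<in>Arr C. Cod C f = Dom C g \<and> Cod C g = Dom C h \<longrightarrow>
         Comp C h (Comp C g f) = Comp C (Comp C h g) f)"

definition iso :: "('o,'a,'z) cat_scheme \<Rightarrow> 'a \<Rightarrow> bool" where
  "iso C f \<longleftrightarrow> f \<in> Arr C \<and>
     (\<exists>g\<in>hom C (Cod C f) (Dom C f). Comp C g f = Id C (Dom C f) \<and> Comp C f g = Id C (Cod C f))"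

definition terminal :: "('o,'a,'z) cat_scheme \<Rightarrow> 'o \<Rightarrow> bool" where
  "terminal C t \<longleftrightarrow> t \<in> Obj C \<and> (\<forall>x\<in>Obj C. \<exists>!f. f \<in> hom C x t)"

definition is_pullback :: "('o,'a,'z) cat_scheme \<Rightarrow> 'a \<Rightarrow> 'a \<Rightarrow> 'a \<Rightarrow> 'a \<Rightarrow> bool" where
  "is_pullback C f g p1 p2 \<longleftrightarrow>
     f \<in> Arr C \<and> g \<in> Arr C \<and> p1 \<in> Arr C \<and> p2 \<in> Arr C \<and>
     Cod C f = Cod C g \<and> Dom C p1 = Dom C p2 \<and> Cod C p1 = Dom C f \<and> Cod C p2 = Dom C g \<and>
     Comp C f p1 = Comp C g p2 \<and>
     (\<forall>q1\<in>Arr C. \<forall>q2\<in>Arr C.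
        Dom C q1 = Dom C q2 \<and> Cod C q1 = Dom C f \<and> Cod C q2 = Dom C g \<and>
        Comp C f q1 = Comp C g q2 \<longrightarrow>
        (\<exists>!h. h \<in> hom C (Dom C q1) (Dom C p1) \<and> Comp C p1 h = q1 \<and> Comp C p2 h = q2))"

definition has_pullbacks :: "('o,'a,'z) cat_scheme \<Rightarrow> bool" where
  "has_pullbacks C \<longleftrightarrow> (\<forall>f\<in>Arr C. \<forall>g\<in>Arr C. Cod C f = Cod C g \<longrightarrow>
     (\<exists>p1 p2. is_pullback C f g p1 p2))"

definition ofs :: "('o,'a,'z) cat_scheme \<Rightarrow> 'a set \<Rightarrow> 'a set \<Rightarrow> bool" where
  "ofs C E M \<longleftrightarrow>
     E \<subseteq> Arr C \<and> M \<subseteq> Arr C \<and>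
     (\<forall>f. iso C f \<longrightarrow> f \<in> E \<and> f \<in> M) \<and>
     (\<forall>f\<in>E. \<forall>g\<in>E. Cod C f = Dom C g \<longrightarrow> Comp C g f \<in> E) \<and>
     (\<forall>f\<in>M. \<forall>g\<in>M. Cod C f = Dom C g \<longrightarrow> Comp C g f \<in> M) \<and>
     (\<forall>e\<in>E. \<forall>m\<in>M. \<forall>f\<in>hom C (Dom C e) (Dom C m). \<forall>g\<in>hom C (Cod C e) (Cod C m).
        Comp C g e = Comp C m f \<longrightarrow>
        (\<exists>!d. d \<in> hom C (Cod C e) (Dom C m) \<and> Comp C d e = f \<and> Comp C m d = g)) \<and>
     (\<forall>h\<in>Arr C. \<exists>e\<in>E. \<exists>m\<in>M. Cod C e = Dom C m \<and> Comp C m e = h)"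

definition stable_ofs :: "('o,'a,'z) cat_scheme \<Rightarrow> 'a set \<Rightarrow> 'a set \<Rightarrow> bool" where
  "stable_ofs C E M \<longleftrightarrow> ofs C E M \<and>
     (\<forall>f g p1 p2. is_pullback C f g p1 p2 \<and> f \<in> E \<longrightarrow> p2 \<in> E)"

record ('p,'b,'o,'a) fnctr =
  Fob :: "'p \<Rightarrow> 'o"
  Far :: "'b \<Rightarrow> 'a"

definition is_functor :: "('p,'b,'y) cat_scheme \<Rightarrow> ('o,'a,'z) cat_scheme \<Rightarrow> ('p,'b,'o,'a) fnctr \<Rightarrow> bool" where
  "is_functor A D F \<longleftrightarrow>
     (\<forall>x\<in>Obj A. Fob F x \<in> Obj D) \<and>
     (\<forall>u\<in>Arr A. Far F u \<in> hom D (Fob F (Dom A u)) (Fob F (Cod A u))) \<and>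
     (\<forall>x\<in>Obj A. Far F (Id A x) = Id D (Fob F x)) \<and>
     (\<forall>u\<in>Arr A. \<forall>v\<in>Arr A. Cod A u = Dom A v \<longrightarrow> Far F (Comp A v u) = Comp D (Far F v) (Far F u)) \<and>
     (\<forall>x. x \<notin> Obj A \<longrightarrow> Fob F x = undefined) \<and>
     (\<forall>u. u \<notin> Arr A \<longrightarrow> Far F u = undefined)"

record ('p,'b,'o,'a) ntrans =
  NTdom :: "('p,'b,'o,'a) fnctr"
  NTcod :: "('p,'b,'o,'a) fnctr"
  NTmap :: "'p \<Rightarrow> 'a"

definition is_ntrans :: "('p,'b,'y) cat_scheme \<Rightarrow> ('o,'a,'z) cat_scheme \<Rightarrow> ('p,'b,'o,'a) ntrans \<Rightarrow> bool" where
  "is_ntrans A D \<alpha> \<longleftrightarrow>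
     is_functor A D (NTdom \<alpha>) \<and> is_functor A D (NTcod \<alpha>) \<and>
     (\<forall>x\<in>Obj A. NTmap \<alpha> x \<in> hom D (Fob (NTdom \<alpha>) x) (Fob (NTcod \<alpha>) x)) \<and>
     (\<forall>u\<in>Arr A. Comp D (Far (NTcod \<alpha>) u) (NTmap \<alpha> (Dom A u))
                = Comp D (NTmap \<alpha> (Cod A u)) (Far (NTdom \<alpha>) u)) \<and>
     (\<forall>x. x \<notin> Obj A \<longrightarrow> NTmap \<alpha> x = undefined)"

definition functor_cat :: "('p,'b,'y) cat_scheme \<Rightarrow> ('o,'a,'z) cat_scheme \<Rightarrow>
    (('p,'b,'o,'a) fnctr, ('p,'b,'o,'a) ntrans) cat" where
  "functor_cat A D = \<lparr>
     Obj = {F. is_functor A D F},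
     Arr = {\<alpha>. is_ntrans A D \<alpha>},
     Dom = NTdom,
     Cod = NTcod,
     Id = (\<lambda>F. \<lparr>NTdom = F, NTcod = F,
                NTmap = (\<lambda>x. if x \<in> Obj A then Id D (Fob F x) else undefined)\<rparr>),
     Comp = (\<lambda>\<beta> \<alpha>. \<lparr>NTdom = NTdom \<alpha>, NTcod = NTcod \<beta>,
                NTmap = (\<lambda>x. if x \<in> Obj A then Comp D (NTmap \<beta> x) (NTmap \<alpha> x) else undefined)\<rparr>) \<rparr>"

definition cartesian :: "('p,'b,'y) cat_scheme \<Rightarrow> ('o,'a,'z) cat_scheme \<Rightarrow> ('p,'b,'o,'a) ntrans \<Rightarrow> bool" where
  "cartesian A D \<alpha> \<longleftrightarrow> is_ntrans A D \<alpha> \<and>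
     (\<forall>u\<in>Arr A. is_pullback D (Far (NTcod \<alpha>) u) (NTmap \<alpha> (Cod A u))
                                (NTmap \<alpha> (Dom A u)) (Far (NTdom \<alpha>) u))"

definition CartNt :: "('p,'b,'y) cat_scheme \<Rightarrow> ('o,'a,'z) cat_scheme \<Rightarrow>
    (('p,'b,'o,'a) fnctr, ('p,'b,'o,'a) ntrans) cat" where
  "CartNt A D = (functor_cat A D)\<lparr>Arr := {\<alpha>. cartesian A D \<alpha>}\<rparr>"

definition componentwise :: "('p,'b,'y) cat_scheme \<Rightarrow> ('o,'a,'z) cat_scheme \<Rightarrow> 'a set \<Rightarrow>
    ('p,'b,'o,'a) ntrans set" where
  "componentwise A D K = {\<alpha>. is_ntrans A D \<alpha> \<and> (\<forall>x\<in>Obj A. NTmap \<alpha> x \<in> K)}"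

end

theory Submission
  imports Defs
begin

text \<open>
  If \<open>\<alpha>\<close> is cartesian, its naturality square along the unique arrow \<open>x \<rightarrow> 1\<close> is a pullback,
  so every component \<open>\<alpha>\<^sub>x\<close> is a pullback of \<open>\<alpha>\<^sub>1\<close>. Since \<open>E\<close> (by stability) and \<open>M\<close>
  (always) are stable under pullback, on cartesian transformations the conditions
  \<open>\<alpha>\<^sub>1 \<in> E\<close> and \<open>\<forall>x. \<alpha>\<^sub>x \<in> E\<close> agree, and likewise for \<open>M\<close>.

  It remains to see that the componentwise classes form a factorization system on
  \<open>CartNt[A,D]\<close>. Composites of cartesian transformations are cartesian by pasting pullbacks.
  Componentwise diagonals are natural by uniqueness of diagonals, and a diagonal \<open>d\<close> with
  \<open>m \<circ> d\<close> and \<open>m\<close> cartesian is cartesian by cancelling pullbacks. To factor a cartesian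
  \<open>\<phi> : F \<rightarrow> K\<close>, factor \<open>\<phi>\<^sub>1 = m\<^sub>0 \<circ> e\<^sub>0\<close> through \<open>I\<close> and let \<open>H x\<close> be the pullback of \<open>m\<^sub>0\<close>
  along \<open>K (x \<rightarrow> 1)\<close>: the projections \<open>H \<rightarrow> K\<close> form a cartesian transformation with components
  in \<open>M\<close>, and the induced \<open>F \<rightarrow> H\<close> is cartesian by cancellation, with components that are
  pullbacks of \<open>e\<^sub>0\<close>, hence in \<open>E\<close>.
\<close>

notation Comp (infixr \<open>\<cdot>\<index>\<close> 55)

section \<open>Categories and pullbacks\<close>

locale in_category =
  fixes C :: "('o,'a,'z) cat_scheme" (structure)
  assumes category: "category C"
begin

lemma in_hom_iff: "f \<in> hom C x y \<longleftrightarrow> f \<in> Arr C \<and> Dom C f = x \<and> Cod C f = y"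
  by (simp add: hom_def)

lemma dom_in_Obj [simp]: "f \<in> Arr C \<Longrightarrow> Dom C f \<in> Obj C"
  and cod_in_Obj [simp]: "f \<in> Arr C \<Longrightarrow> Cod C f \<in> Obj C"
  using category unfolding category_def by blast+

lemma comp_in_Arr [simp]: "f \<in> Arr C \<Longrightarrow> g \<in> Arr C \<Longrightarrow> Cod C f = Dom C g \<Longrightarrow> g \<cdot> f \<in> Arr C"
  and dom_comp [simp]: "f \<in> Arr C \<Longrightarrow> g \<in> Arr C \<Longrightarrow> Cod C f = Dom C g \<Longrightarrow> Dom C (g \<cdot> f) = Dom C f"
  and cod_comp [simp]: "f \<in> Arr C \<Longrightarrow> g \<in> Arr C \<Longrightarrow> Cod C f = Dom C g \<Longrightarrow> Cod C (g \<cdot> f) = Cod C g"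
  using category unfolding category_def hom_def by blast+

lemma id_in_Arr [simp]: "x \<in> Obj C \<Longrightarrow> Id C x \<in> Arr C"
  and dom_id [simp]: "x \<in> Obj C \<Longrightarrow> Dom C (Id C x) = x"
  and cod_id [simp]: "x \<in> Obj C \<Longrightarrow> Cod C (Id C x) = x"
  using category unfolding category_def hom_def by blast+

lemma comp_id_right [simp]: "f \<in> Arr C \<Longrightarrow> Dom C f = x \<Longrightarrow> f \<cdot> Id C x = f"
  and comp_id_left [simp]: "f \<in> Arr C \<Longrightarrow> Cod C f = x \<Longrightarrow> Id C x \<cdot> f = f"
  using category unfolding category_def by blast+

lemma comp_assoc:
  "f \<in> Arr C \<Longrightarrow> g \<in> Arr C \<Longrightarrow> h \<in> Arr C \<Longrightarrow> Cod C f = Dom C g \<Longrightarrow> Cod C g = Dom C h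
   \<Longrightarrow> (h \<cdot> g) \<cdot> f = h \<cdot> g \<cdot> f"
  using category unfolding category_def by metis

lemma comp_assoc_hom:
  "f \<in> hom C w x \<Longrightarrow> g \<in> hom C x y \<Longrightarrow> h \<in> hom C y z \<Longrightarrow> (h \<cdot> g) \<cdot> f = h \<cdot> g \<cdot> f"
  by (simp add: in_hom_iff comp_assoc)

lemma comp_in_hom [intro]: "f \<in> hom C x y \<Longrightarrow> g \<in> hom C y z \<Longrightarrow> g \<cdot> f \<in> hom C x z"
  by (simp add: in_hom_iff)

lemma isoI:
  assumes "f \<in> hom C x y" "g \<in> hom C y x" "g \<cdot> f = Id C x" "f \<cdot> g = Id C y"
  shows "iso C f"
  using assms unfolding iso_def by (auto simp: in_hom_iff)

lemma comm_square_paste: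
  assumes "a \<in> hom C x y" "b \<in> hom C y z" "a' \<in> hom C x' y'" "b' \<in> hom C y' z'"
    and "f \<in> hom C x x'" "g \<in> hom C y y'" "h \<in> hom C z z'"
    and "g \<cdot> a = a' \<cdot> f" "h \<cdot> b = b' \<cdot> g"
  shows "h \<cdot> b \<cdot> a = (b' \<cdot> a') \<cdot> f"
proof -
  have "h \<cdot> b \<cdot> a = (b' \<cdot> g) \<cdot> a"
    using comp_assoc_hom[OF assms(1,2,7)] assms(9) by simp
  also have "\<dots> = b' \<cdot> a' \<cdot> f"
    using comp_assoc_hom[OF assms(1,6,4)] assms(8) by simp
  also have "\<dots> = (b' \<cdot> a') \<cdot> f"
    using comp_assoc_hom[OF assms(5,3,4)] by simp
  finally show ?thesis .
qed

lemma pullback_sym: "is_pullback C f g p1 p2 \<Longrightarrow> is_pullback C g f p2 p1"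
  unfolding is_pullback_def by (smt (verit))

lemma pullbackD:
  assumes "is_pullback C f g p1 p2"
  shows "f \<in> hom C (Cod C p1) (Cod C g)" "g \<in> hom C (Cod C p2) (Cod C g)"
    "p1 \<in> hom C (Dom C p1) (Cod C p1)" "p2 \<in> hom C (Dom C p1) (Cod C p2)" "f \<cdot> p1 = g \<cdot> p2"
proof -
  have "f \<in> Arr C \<and> g \<in> Arr C \<and> p1 \<in> Arr C \<and> p2 \<in> Arr C \<and> Cod C f = Cod C g \<and>
      Dom C p1 = Dom C p2 \<and> Cod C p1 = Dom C f \<and> Cod C p2 = Dom C g \<and> f \<cdot> p1 = g \<cdot> p2"
    using assms unfolding is_pullback_def by blast
  then show "f \<in> hom C (Cod C p1) (Cod C g)" "g \<in> hom C (Cod C p2) (Cod C g)"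
    "p1 \<in> hom C (Dom C p1) (Cod C p1)" "p2 \<in> hom C (Dom C p1) (Cod C p2)" "f \<cdot> p1 = g \<cdot> p2"
    by (simp_all add: in_hom_iff)
qed

lemma pullback_universal:
  assumes "is_pullback C f g p1 p2" "q1 \<in> hom C Q (Dom C f)" "q2 \<in> hom C Q (Dom C g)"
    "f \<cdot> q1 = g \<cdot> q2"
  shows "\<exists>!h. h \<in> hom C Q (Dom C p1) \<and> p1 \<cdot> h = q1 \<and> p2 \<cdot> h = q2"
proof -
  have "q1 \<in> Arr C" "q2 \<in> Arr C" "Dom C q1 = Q" "Dom C q2 = Q" "Cod C q1 = Dom C f"
    "Cod C q2 = Dom C g"
    using assms(2,3) by (auto simp: in_hom_iff)
  moreover have U: "\<forall>q1\<in>Arr C. \<forall>q2\<in>Arr C.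
        Dom C q1 = Dom C q2 \<and> Cod C q1 = Dom C f \<and> Cod C q2 = Dom C g \<and> f \<cdot> q1 = g \<cdot> q2 \<longrightarrow>
        (\<exists>!h. h \<in> hom C (Dom C q1) (Dom C p1) \<and> p1 \<cdot> h = q1 \<and> p2 \<cdot> h = q2)"
    using assms(1) unfolding is_pullback_def by blast
  ultimately have "\<exists>!h. h \<in> hom C (Dom C q1) (Dom C p1) \<and> p1 \<cdot> h = q1 \<and> p2 \<cdot> h = q2"
    using assms(4) U[rule_format, of q1 q2] by simp
  then show ?thesis
    using \<open>Dom C q1 = Q\<close> by simp
qed

lemma pullback_lift:
  assumes pb: "is_pullback C f g p1 p2" and "p1 \<in> hom C P X" "p2 \<in> hom C P Y"
    and "q1 \<in> hom C Q X" "q2 \<in> hom C Q Y" "f \<cdot> q1 = g \<cdot> q2"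
  shows "\<exists>h\<in>hom C Q P. p1 \<cdot> h = q1 \<and> p2 \<cdot> h = q2"
proof -
  have "q1 \<in> hom C Q (Dom C f)" "q2 \<in> hom C Q (Dom C g)" and P: "Dom C p1 = P"
    using pullbackD[OF pb] assms(2-5) by (auto simp: in_hom_iff)
  from pullback_universal[OF pb this(1,2) assms(6)]
  obtain h where "h \<in> hom C Q (Dom C p1)" "p1 \<cdot> h = q1" "p2 \<cdot> h = q2"
    by auto
  with P show ?thesis
    by auto
qed

lemma pullback_jointly_monic:
  assumes pb: "is_pullback C f g p1 p2" and "p1 \<in> hom C P X"
    and h: "h \<in> hom C Q P" "h' \<in> hom C Q P" and "p1 \<cdot> h = p1 \<cdot> h'" "p2 \<cdot> h = p2 \<cdot> h'"
  shows "h = h'"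
proof -
  note sq = pullbackD[OF pb]
  have P: "Dom C p1 = P"
    using assms(2) by (simp add: in_hom_iff)
  have "f \<cdot> p1 \<cdot> h = (f \<cdot> p1) \<cdot> h"
    using comp_assoc_hom[OF h(1)[folded P] sq(3,1)] by simp
  also have "\<dots> = g \<cdot> p2 \<cdot> h"
    using comp_assoc_hom[OF h(1)[folded P] sq(4,2)] sq(5) by simp
  finally have comm: "f \<cdot> p1 \<cdot> h = g \<cdot> p2 \<cdot> h" .
  have "p1 \<cdot> h \<in> hom C Q (Dom C f)" "p2 \<cdot> h \<in> hom C Q (Dom C g)"
    using sq h P by (auto simp: in_hom_iff)
  from pullback_universal[OF pb this comm]
  have "\<exists>!k. k \<in> hom C Q (Dom C p1) \<and> p1 \<cdot> k = p1 \<cdot> h \<and> p2 \<cdot> k = p2 \<cdot> h" .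
  moreover have "h' \<in> hom C Q (Dom C p1) \<and> p1 \<cdot> h' = p1 \<cdot> h \<and> p2 \<cdot> h' = p2 \<cdot> h"
    using h(2) P assms(5,6) by simp
  ultimately show ?thesis
    using h(1) P by auto
qed

lemma is_pullbackI:
  assumes "f \<in> hom C X Z" "g \<in> hom C Y Z" "p1 \<in> hom C P X" "p2 \<in> hom C P Y"
    and "f \<cdot> p1 = g \<cdot> p2"
    and lift: "\<And>Q q1 q2. q1 \<in> hom C Q X \<Longrightarrow> q2 \<in> hom C Q Y \<Longrightarrow> f \<cdot> q1 = g \<cdot> q2 \<Longrightarrow>
      \<exists>h\<in>hom C Q P. p1 \<cdot> h = q1 \<and> p2 \<cdot> h = q2"
    and monic: "\<And>Q h h'. h \<in> hom C Q P \<Longrightarrow> h' \<in> hom C Q P \<Longrightarrow>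
      p1 \<cdot> h = p1 \<cdot> h' \<Longrightarrow> p2 \<cdot> h = p2 \<cdot> h' \<Longrightarrow> h = h'"
  shows "is_pullback C f g p1 p2"
proof -
  have univ: "\<exists>!h. h \<in> hom C (Dom C q1) (Dom C p1) \<and> p1 \<cdot> h = q1 \<and> p2 \<cdot> h = q2"
    if q: "q1 \<in> Arr C" "q2 \<in> Arr C" "Dom C q1 = Dom C q2" "Cod C q1 = Dom C f"
      "Cod C q2 = Dom C g" "f \<cdot> q1 = g \<cdot> q2" for q1 q2
  proof -
    have "q1 \<in> hom C (Dom C q1) X" "q2 \<in> hom C (Dom C q1) Y"
      using q assms(1,2) by (auto simp: in_hom_iff)
    then obtain h where h: "h \<in> hom C (Dom C q1) P" "p1 \<cdot> h = q1" "p2 \<cdot> h = q2"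
      using lift q(6) by blast
    have "h' = h" if "h' \<in> hom C (Dom C q1) P" "p1 \<cdot> h' = q1" "p2 \<cdot> h' = q2" for h'
      using monic[OF that(1) h(1)] that(2,3) h(2,3) by simp
    moreover have "Dom C p1 = P"
      using assms(3) by (simp add: in_hom_iff)
    ultimately show ?thesis
      using h by blast
  qed
  have "f \<in> Arr C" "g \<in> Arr C" "p1 \<in> Arr C" "p2 \<in> Arr C" "Cod C f = Cod C g"
    "Dom C p1 = Dom C p2" "Cod C p1 = Dom C f" "Cod C p2 = Dom C g"
    using assms(1-4) by (simp_all add: in_hom_iff)
  with univ assms(5) show ?thesis
    unfolding is_pullback_def by blast
qed

lemma pullback_paste:
  assumes right: "is_pullback C f g p1 p2" and left: "is_pullback C p2 g' q1 q2"
  shows "is_pullback C f (g \<cdot> g') (p1 \<cdot> q1) q2"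
proof -
  note R = pullbackD[OF right] and L = pullbackD[OF left]
  define X Y Z P P' Y' where "X = Cod C p1" and "Y = Cod C p2" and "Z = Cod C g"
    and "P = Dom C p1" and "P' = Dom C q1" and "Y' = Cod C q2"
  have homs: "f \<in> hom C X Z" "g \<in> hom C Y Z" "p1 \<in> hom C P X" "p2 \<in> hom C P Y"
    "g' \<in> hom C Y' Y" "q1 \<in> hom C P' P" "q2 \<in> hom C P' Y'"
    using R L unfolding X_def Y_def Z_def P_def P'_def Y'_def by (auto simp: in_hom_iff)
  show ?thesis
  proof (rule is_pullbackI)
    show "f \<in> hom C X Z" "g \<cdot> g' \<in> hom C Y' Z" "p1 \<cdot> q1 \<in> hom C P' X" "q2 \<in> hom C P' Y'"
      using homs by auto
    show "f \<cdot> p1 \<cdot> q1 = (g \<cdot> g') \<cdot> q2"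
      using comm_square_paste[OF homs(6,3,5,2,7,4,1) L(5) R(5)] .
  next
    fix Q r1 r2
    assume r: "r1 \<in> hom C Q X" "r2 \<in> hom C Q Y'" "f \<cdot> r1 = (g \<cdot> g') \<cdot> r2"
    then have "f \<cdot> r1 = g \<cdot> g' \<cdot> r2"
      using comp_assoc_hom[OF r(2) homs(5,2)] by simp
    then obtain h1 where h1: "h1 \<in> hom C Q P" "p1 \<cdot> h1 = r1" "p2 \<cdot> h1 = g' \<cdot> r2"
      using pullback_lift[OF right homs(3,4) r(1) comp_in_hom[OF r(2) homs(5)]] by blast
    then obtain h where h: "h \<in> hom C Q P'" "q1 \<cdot> h = h1" "q2 \<cdot> h = r2"
      using pullback_lift[OF left homs(6,7) h1(1) r(2)] by blast
    then have "(p1 \<cdot> q1) \<cdot> h = r1"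
      using comp_assoc_hom[OF h(1) homs(6,3)] h1(2) by simp
    with h show "\<exists>h\<in>hom C Q P'. (p1 \<cdot> q1) \<cdot> h = r1 \<and> q2 \<cdot> h = r2"
      by blast
  next
    fix Q h h'
    assume h: "h \<in> hom C Q P'" "h' \<in> hom C Q P'"
      and eq: "(p1 \<cdot> q1) \<cdot> h = (p1 \<cdot> q1) \<cdot> h'" "q2 \<cdot> h = q2 \<cdot> h'"
    have "p1 \<cdot> q1 \<cdot> h = p1 \<cdot> q1 \<cdot> h'"
      using eq(1) comp_assoc_hom[OF h(1) homs(6,3)] comp_assoc_hom[OF h(2) homs(6,3)] by simp
    moreover have "p2 \<cdot> q1 \<cdot> h = p2 \<cdot> q1 \<cdot> h'"
      using eq(2) L(5) comp_assoc_hom[OF h(1) homs(6,4)] comp_assoc_hom[OF h(2) homs(6,4)]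
        comp_assoc_hom[OF h(1) homs(7,5)] comp_assoc_hom[OF h(2) homs(7,5)] by simp
    ultimately have "q1 \<cdot> h = q1 \<cdot> h'"
      using pullback_jointly_monic[OF right homs(3) comp_in_hom[OF h(1) homs(6)]
          comp_in_hom[OF h(2) homs(6)]] by blast
    then show "h = h'"
      using pullback_jointly_monic[OF left homs(6) h] eq(2) by blast
  qed
qed

lemma pullback_cancel:
  assumes right: "is_pullback C f g p1 p2" and outer: "is_pullback C f (g \<cdot> g') (p1 \<cdot> q1) q2"
    and comm: "p2 \<cdot> q1 = g' \<cdot> q2"
    and "q1 \<in> hom C (Dom C q2) (Dom C p1)" "g' \<in> hom C (Cod C q2) (Dom C g)"
  shows "is_pullback C p2 g' q1 q2"
proof -
  note R = pullbackD[OF right]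
  define X Y Z P P' Y' where "X = Cod C p1" and "Y = Cod C p2" and "Z = Cod C g"
    and "P = Dom C p1" and "P' = Dom C q2" and "Y' = Cod C q2"
  have "q2 \<in> Arr C"
    using pullbackD(4)[OF outer] by (simp add: in_hom_iff)
  then have homs: "f \<in> hom C X Z" "g \<in> hom C Y Z" "p1 \<in> hom C P X" "p2 \<in> hom C P Y"
    "g' \<in> hom C Y' Y" "q1 \<in> hom C P' P" "q2 \<in> hom C P' Y'"
    using R(1-4) assms(4,5) unfolding X_def Y_def Z_def P_def P'_def Y'_def
    by (auto simp: in_hom_iff)
  show ?thesis
  proof (rule is_pullbackI[OF homs(4,5,6,7) comm])
    fix Q r1 r2
    assume r: "r1 \<in> hom C Q P" "r2 \<in> hom C Q Y'" "p2 \<cdot> r1 = g' \<cdot> r2"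
    have "f \<cdot> p1 \<cdot> r1 = (g \<cdot> g') \<cdot> r2"
      using comm_square_paste[OF r(1) homs(3) homs(5,2) r(2) homs(4,1) r(3) R(5)] .
    then obtain h where h: "h \<in> hom C Q P'" "(p1 \<cdot> q1) \<cdot> h = p1 \<cdot> r1" "q2 \<cdot> h = r2"
      using pullback_lift[OF outer comp_in_hom[OF homs(6,3)] homs(7) comp_in_hom[OF r(1) homs(3)] r(2)]
      by blast
    have "p1 \<cdot> q1 \<cdot> h = p1 \<cdot> r1"
      using h(2) comp_assoc_hom[OF h(1) homs(6,3)] by simp
    moreover have "p2 \<cdot> q1 \<cdot> h = p2 \<cdot> r1"
      using h r(3) comm comp_assoc_hom[OF h(1) homs(6,4)] comp_assoc_hom[OF h(1) homs(7,5)]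
      by simp
    ultimately have "q1 \<cdot> h = r1"
      using pullback_jointly_monic[OF right homs(3) comp_in_hom[OF h(1) homs(6)] r(1)] by blast
    with h show "\<exists>h\<in>hom C Q P'. q1 \<cdot> h = r1 \<and> q2 \<cdot> h = r2"
      by blast
  next
    fix Q h h'
    assume h: "h \<in> hom C Q P'" "h' \<in> hom C Q P'" and eq: "q1 \<cdot> h = q1 \<cdot> h'" "q2 \<cdot> h = q2 \<cdot> h'"
    have "(p1 \<cdot> q1) \<cdot> h = (p1 \<cdot> q1) \<cdot> h'"
      using eq(1) comp_assoc_hom[OF h(1) homs(6,3)] comp_assoc_hom[OF h(2) homs(6,3)] by simp
    then show "h = h'"
      using pullback_jointly_monic[OF outer comp_in_hom[OF homs(6,3)] h] eq(2) by blast
  qed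
qed

end

section \<open>Orthogonal factorization systems\<close>

lemma ofsI:
  assumes "E \<subseteq> Arr C" "M \<subseteq> Arr C"
    and "\<And>f. iso C f \<Longrightarrow> f \<in> E" "\<And>f. iso C f \<Longrightarrow> f \<in> M"
    and "\<And>f g. f \<in> E \<Longrightarrow> g \<in> E \<Longrightarrow> Cod C f = Dom C g \<Longrightarrow> g \<cdot>\<^bsub>C\<^esub> f \<in> E"
    and "\<And>f g. f \<in> M \<Longrightarrow> g \<in> M \<Longrightarrow> Cod C f = Dom C g \<Longrightarrow> g \<cdot>\<^bsub>C\<^esub> f \<in> M"
    and "\<And>e m f g. e \<in> E \<Longrightarrow> m \<in> M \<Longrightarrow> f \<in> hom C (Dom C e) (Dom C m) \<Longrightarrow>
      g \<in> hom C (Cod C e) (Cod C m) \<Longrightarrow> g \<cdot>\<^bsub>C\<^esub> e = m \<cdot>\<^bsub>C\<^esub> f \<Longrightarrow>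
      \<exists>!d. d \<in> hom C (Cod C e) (Dom C m) \<and> d \<cdot>\<^bsub>C\<^esub> e = f \<and> m \<cdot>\<^bsub>C\<^esub> d = g"
    and "\<And>h. h \<in> Arr C \<Longrightarrow> \<exists>e\<in>E. \<exists>m\<in>M. Cod C e = Dom C m \<and> m \<cdot>\<^bsub>C\<^esub> e = h"
  shows "ofs C E M"
  unfolding ofs_def by (intro conjI allI impI ballI) (simp_all add: assms)

locale factorization_system = in_category C for C :: "('o,'a,'z) cat_scheme" (structure) +
  fixes E M :: "'a set"
  assumes ofs: "ofs C E M"
begin

lemma E_in_Arr: "e \<in> E \<Longrightarrow> e \<in> Arr C"
  and M_in_Arr: "m \<in> M \<Longrightarrow> m \<in> Arr C"
  and iso_in_E: "iso C f \<Longrightarrow> f \<in> E"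
  and iso_in_M: "iso C f \<Longrightarrow> f \<in> M"
  and E_comp: "f \<in> E \<Longrightarrow> g \<in> E \<Longrightarrow> Cod C f = Dom C g \<Longrightarrow> g \<cdot> f \<in> E"
  and M_comp: "f \<in> M \<Longrightarrow> g \<in> M \<Longrightarrow> Cod C f = Dom C g \<Longrightarrow> g \<cdot> f \<in> M"
  and factorization: "h \<in> Arr C \<Longrightarrow> \<exists>e\<in>E. \<exists>m\<in>M. Cod C e = Dom C m \<and> m \<cdot> e = h"
  using ofs unfolding ofs_def by blast+

lemma diagonal:
  assumes "e \<in> E" "m \<in> M" "e \<in> hom C x y" "m \<in> hom C u v" "f \<in> hom C x u" "g \<in> hom C y v"
    and "g \<cdot> e = m \<cdot> f"
  shows "\<exists>!d. d \<in> hom C y u \<and> d \<cdot> e = f \<and> m \<cdot> d = g"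
proof -
  have "f \<in> hom C (Dom C e) (Dom C m)" "g \<in> hom C (Cod C e) (Cod C m)"
    "Cod C e = y" "Dom C m = u"
    using assms(3-6) by (auto simp: in_hom_iff)
  then show ?thesis
    using ofs assms(1,2,7) unfolding ofs_def by metis
qed

lemma diagonal_unique:
  assumes "e \<in> E" "m \<in> M" "e \<in> hom C x y" "m \<in> hom C u v" "d \<in> hom C y u" "d' \<in> hom C y u"
    and "d \<cdot> e = d' \<cdot> e" "m \<cdot> d = m \<cdot> d'"
  shows "d = d'"
proof -
  have "d' \<cdot> e \<in> hom C x u" "m \<cdot> d' \<in> hom C y v" "(m \<cdot> d') \<cdot> e = m \<cdot> d' \<cdot> e"
    using assms(3-6) by (auto simp: comp_assoc_hom)
  then have "\<exists>!k. k \<in> hom C y u \<and> k \<cdot> e = d' \<cdot> e \<and> m \<cdot> k = m \<cdot> d'"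
    using diagonal[OF assms(1-4)] by blast
  then show ?thesis
    using assms(5-8) by auto
qed

lemma diagonal_natural:
  assumes "e \<in> E" "m' \<in> M"
    and homs: "e \<in> hom C a b" "e' \<in> hom C a' b'" "m \<in> hom C c d" "m' \<in> hom C c' d'"
      "\<delta> \<in> hom C b c" "\<delta>' \<in> hom C b' c'" "s \<in> hom C a a'" "t \<in> hom C b b'" "p \<in> hom C c c'"
      "q \<in> hom C d d'" "f \<in> hom C a c" "g \<in> hom C b d"
    and lifts: "\<delta> \<cdot> e = f" "m \<cdot> \<delta> = g" "\<delta>' \<cdot> e' = f'" "m' \<cdot> \<delta>' = g'"
    and squares: "t \<cdot> e = e' \<cdot> s" "q \<cdot> m = m' \<cdot> p" "p \<cdot> f = f' \<cdot> s" "q \<cdot> g = g' \<cdot> t"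
  shows "p \<cdot> \<delta> = \<delta>' \<cdot> t"
proof (rule diagonal_unique[OF assms(1,2) homs(1,4)])
  show "p \<cdot> \<delta> \<in> hom C b c'" "\<delta>' \<cdot> t \<in> hom C b c'"
    using homs by auto
  have "(p \<cdot> \<delta>) \<cdot> e = p \<cdot> f"
    using comp_assoc_hom[OF homs(1,5,9)] lifts(1) by simp
  also have "\<dots> = (\<delta>' \<cdot> e') \<cdot> s"
    using squares(3) lifts(3) by simp
  also have "\<dots> = (\<delta>' \<cdot> t) \<cdot> e"
    using comp_assoc_hom[OF homs(7,2,6)] comp_assoc_hom[OF homs(1,8,6)] squares(1) by simp
  finally show "(p \<cdot> \<delta>) \<cdot> e = (\<delta>' \<cdot> t) \<cdot> e" .
  have "m' \<cdot> p \<cdot> \<delta> = q \<cdot> g"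
    using comp_assoc_hom[OF homs(5,9,4)] comp_assoc_hom[OF homs(5,3,10)] squares(2) lifts(2) by simp
  also have "\<dots> = m' \<cdot> \<delta>' \<cdot> t"
    using comp_assoc_hom[OF homs(8,6,4)] squares(4) lifts(4) by simp
  finally show "m' \<cdot> p \<cdot> \<delta> = m' \<cdot> \<delta>' \<cdot> t" .
qed

lemma E_section_iso:
  assumes "e \<in> E" "m \<in> M" and homs: "e \<in> hom C P I" "m \<in> hom C I Y" "h \<in> hom C I P"
    and "h \<cdot> e = Id C P" "(m \<cdot> e) \<cdot> h = m"
  shows "iso C e"
proof (rule isoI[OF homs(1,3) assms(6)])
  show "e \<cdot> h = Id C I"
  proof (rule diagonal_unique[OF assms(1,2) homs(1,2)])
    show "e \<cdot> h \<in> hom C I I" "Id C I \<in> hom C I I"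
      using homs by (auto simp: in_hom_iff)
    show "(e \<cdot> h) \<cdot> e = Id C I \<cdot> e" "m \<cdot> e \<cdot> h = m \<cdot> Id C I"
      using comp_assoc_hom[OF homs(1,3,1)] comp_assoc_hom[OF homs(3,1,2)] assms(6,7) homs
      by (simp_all add: in_hom_iff)
  qed
qed

lemma M_pullback_stable:
  assumes pb: "is_pullback C f g p1 p2" and "f \<in> M"
  shows "p2 \<in> M"
proof -
  note sq = pullbackD[OF pb]
  define X Y Z P where "X = Dom C f" and "Y = Dom C g" and "Z = Cod C g" and "P = Dom C p1"
  have homs: "f \<in> hom C X Z" "g \<in> hom C Y Z" "p1 \<in> hom C P X" "p2 \<in> hom C P Y"
    using sq unfolding X_def Y_def Z_def P_def by (auto simp: in_hom_iff)
  obtain e m where em: "e \<in> E" "m \<in> M" "Cod C e = Dom C m" "m \<cdot> e = p2"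
    using factorization homs(4) by (metis in_hom_iff)
  define I where "I = Cod C e"
  have e: "e \<in> hom C P I" and m: "m \<in> hom C I Y"
    using em homs(4) E_in_Arr M_in_Arr unfolding I_def by (auto simp: in_hom_iff)
  have "(g \<cdot> m) \<cdot> e = f \<cdot> p1"
    using comp_assoc_hom[OF e m homs(2)] em(4) sq(5) by simp
  then obtain d where d: "d \<in> hom C I X" "d \<cdot> e = p1" "f \<cdot> d = g \<cdot> m"
    using diagonal[OF em(1) \<open>f \<in> M\<close> e homs(1,3)] m homs(2) by blast
  obtain h where h: "h \<in> hom C I P" "p1 \<cdot> h = d" "p2 \<cdot> h = m"
    using pullback_lift[OF pb homs(3,4) d(1) m d(3)] by blast
  have "h \<cdot> e = Id C P"
  proof (rule pullback_jointly_monic[OF pb homs(3)])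
    show "h \<cdot> e \<in> hom C P P" "Id C P \<in> hom C P P"
      using h(1) e homs(3) by (auto simp: in_hom_iff)
    show "p1 \<cdot> h \<cdot> e = p1 \<cdot> Id C P" "p2 \<cdot> h \<cdot> e = p2 \<cdot> Id C P"
      using comp_assoc_hom[OF e h(1) homs(3)] comp_assoc_hom[OF e h(1) homs(4)] h(2,3) d(2) em(4)
        homs(3,4) by (simp_all add: in_hom_iff)
  qed
  with em(4) h(3) have "iso C e"
    using E_section_iso[OF em(1,2) e m h(1)] by simp
  then show "p2 \<in> M"
    using M_comp[OF iso_in_M em(2,3)] em(4) by simp
qed

end

locale stable_factorization_system = factorization_system +
  assumes E_pullback_stable: "is_pullback C f g p1 p2 \<Longrightarrow> f \<in> E \<Longrightarrow> p2 \<in> E"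

section \<open>Functors and natural transformations\<close>

lemma functor_Far_in_hom:
    "is_functor A D F \<Longrightarrow> u \<in> Arr A \<Longrightarrow> Far F u \<in> hom D (Fob F (Dom A u)) (Fob F (Cod A u))"
  and functor_id: "is_functor A D F \<Longrightarrow> x \<in> Obj A \<Longrightarrow> Far F (Id A x) = Id D (Fob F x)"
  and functor_comp: "is_functor A D F \<Longrightarrow> u \<in> Arr A \<Longrightarrow> v \<in> Arr A \<Longrightarrow> Cod A u = Dom A v \<Longrightarrow>
    Far F (v \<cdot>\<^bsub>A\<^esub> u) = Far F v \<cdot>\<^bsub>D\<^esub> Far F u"
  unfolding is_functor_def by blast+

lemma ntrans_dom_functor: "is_ntrans A D \<alpha> \<Longrightarrow> is_functor A D (NTdom \<alpha>)"
  and ntrans_cod_functor: "is_ntrans A D \<alpha> \<Longrightarrow> is_functor A D (NTcod \<alpha>)"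
  and ntrans_component_in_hom:
    "is_ntrans A D \<alpha> \<Longrightarrow> x \<in> Obj A \<Longrightarrow> NTmap \<alpha> x \<in> hom D (Fob (NTdom \<alpha>) x) (Fob (NTcod \<alpha>) x)"
  and ntrans_naturality: "is_ntrans A D \<alpha> \<Longrightarrow> u \<in> Arr A \<Longrightarrow>
    Far (NTcod \<alpha>) u \<cdot>\<^bsub>D\<^esub> NTmap \<alpha> (Dom A u) = NTmap \<alpha> (Cod A u) \<cdot>\<^bsub>D\<^esub> Far (NTdom \<alpha>) u"
  and ntrans_extensional: "is_ntrans A D \<alpha> \<Longrightarrow> x \<notin> Obj A \<Longrightarrow> NTmap \<alpha> x = undefined"
  unfolding is_ntrans_def by blast+

lemma ntrans_eqI:
  assumes "is_ntrans A D \<alpha>" "is_ntrans A D \<beta>" "NTdom \<alpha> = NTdom \<beta>" "NTcod \<alpha> = NTcod \<beta>"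
    and "\<And>x. x \<in> Obj A \<Longrightarrow> NTmap \<alpha> x = NTmap \<beta> x"
  shows "\<alpha> = \<beta>"
proof -
  have "NTmap \<alpha> = NTmap \<beta>"
    using assms(5) ntrans_extensional[OF assms(1)] ntrans_extensional[OF assms(2)] by fastforce
  then show ?thesis
    using assms(3,4) by (cases \<alpha>, cases \<beta>) simp
qed

lemma cartesian_is_ntrans: "cartesian A D \<alpha> \<Longrightarrow> is_ntrans A D \<alpha>"
  and cartesian_pullback: "cartesian A D \<alpha> \<Longrightarrow> u \<in> Arr A \<Longrightarrow>
    is_pullback D (Far (NTcod \<alpha>) u) (NTmap \<alpha> (Cod A u)) (NTmap \<alpha> (Dom A u)) (Far (NTdom \<alpha>) u)"
  unfolding cartesian_def by blast+

lemma CartNt_simps [simp]: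
  "Obj (CartNt A D) = {F. is_functor A D F}"
  "Arr (CartNt A D) = {\<alpha>. cartesian A D \<alpha>}"
  "Dom (CartNt A D) = NTdom"
  "Cod (CartNt A D) = NTcod"
  "NTdom (\<beta> \<cdot>\<^bsub>CartNt A D\<^esub> \<alpha>) = NTdom \<alpha>"
  "NTcod (\<beta> \<cdot>\<^bsub>CartNt A D\<^esub> \<alpha>) = NTcod \<beta>"
  "x \<in> Obj A \<Longrightarrow> NTmap (\<beta> \<cdot>\<^bsub>CartNt A D\<^esub> \<alpha>) x = NTmap \<beta> x \<cdot>\<^bsub>D\<^esub> NTmap \<alpha> x"
  "x \<notin> Obj A \<Longrightarrow> NTmap (\<beta> \<cdot>\<^bsub>CartNt A D\<^esub> \<alpha>) x = undefined"
  "NTdom (Id (CartNt A D) F) = F"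
  "NTcod (Id (CartNt A D) F) = F"
  "x \<in> Obj A \<Longrightarrow> NTmap (Id (CartNt A D) F) x = Id D (Fob F x)"
  by (simp_all add: CartNt_def functor_cat_def)

locale diagrams = in_category D + A: in_category A
  for D :: "('o,'a,'z) cat_scheme" (structure) and A :: "('p,'b,'y) cat_scheme"
begin

abbreviation vcomp :: "('p,'b,'o,'a) ntrans \<Rightarrow> ('p,'b,'o,'a) ntrans \<Rightarrow> ('p,'b,'o,'a) ntrans"
    (infixr \<open>\<bullet>\<close> 55)
  where "\<beta> \<bullet> \<alpha> \<equiv> \<beta> \<cdot>\<^bsub>CartNt A D\<^esub> \<alpha>"

lemma vcomp_is_ntrans:
  assumes \<alpha>: "is_ntrans A D \<alpha>" and \<beta>: "is_ntrans A D \<beta>" and "NTcod \<alpha> = NTdom \<beta>"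
  shows "is_ntrans A D (\<beta> \<bullet> \<alpha>)"
  unfolding is_ntrans_def
proof (intro conjI ballI allI impI)
  show "is_functor A D (NTdom (\<beta> \<bullet> \<alpha>))" "is_functor A D (NTcod (\<beta> \<bullet> \<alpha>))"
    using ntrans_dom_functor[OF \<alpha>] ntrans_cod_functor[OF \<beta>] by simp_all
  show "NTmap (\<beta> \<bullet> \<alpha>) x \<in> hom D (Fob (NTdom (\<beta> \<bullet> \<alpha>)) x) (Fob (NTcod (\<beta> \<bullet> \<alpha>)) x)"
    if "x \<in> Obj A" for x
    using ntrans_component_in_hom[OF \<alpha> that] ntrans_component_in_hom[OF \<beta> that] assms(3) that
    by auto
  show "Far (NTcod (\<beta> \<bullet> \<alpha>)) u \<cdot> NTmap (\<beta> \<bullet> \<alpha>) (Dom A u)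
      = NTmap (\<beta> \<bullet> \<alpha>) (Cod A u) \<cdot> Far (NTdom (\<beta> \<bullet> \<alpha>)) u" if u: "u \<in> Arr A" for u
  proof -
    note \<beta>' = ntrans_component_in_hom[OF \<beta>, folded assms(3)] ntrans_naturality[OF \<beta> u, folded assms(3)]
    show ?thesis
      using comm_square_paste[OF ntrans_component_in_hom[OF \<alpha>] \<beta>'(1)
          ntrans_component_in_hom[OF \<alpha>] \<beta>'(1)
          functor_Far_in_hom[OF ntrans_dom_functor[OF \<alpha>] u]
          functor_Far_in_hom[OF ntrans_cod_functor[OF \<alpha>] u]
          functor_Far_in_hom[OF ntrans_cod_functor[OF \<beta>] u]
          ntrans_naturality[OF \<alpha> u] \<beta>'(2)] u
      by simp
  qed
qed simp

lemma cartesian_vcomp: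
  assumes \<alpha>: "cartesian A D \<alpha>" and \<beta>: "cartesian A D \<beta>" and "NTcod \<alpha> = NTdom \<beta>"
  shows "cartesian A D (\<beta> \<bullet> \<alpha>)"
  unfolding cartesian_def
proof (intro conjI ballI)
  show "is_ntrans A D (\<beta> \<bullet> \<alpha>)"
    using vcomp_is_ntrans cartesian_is_ntrans assms by blast
  show "is_pullback D (Far (NTcod (\<beta> \<bullet> \<alpha>)) u) (NTmap (\<beta> \<bullet> \<alpha>) (Cod A u))
      (NTmap (\<beta> \<bullet> \<alpha>) (Dom A u)) (Far (NTdom (\<beta> \<bullet> \<alpha>)) u)" if u: "u \<in> Arr A" for u
    using pullback_paste[OF cartesian_pullback[OF \<beta> u, folded assms(3)] cartesian_pullback[OF \<alpha> u]] u
    by simp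
qed

lemma cartesian_right_cancel:
  assumes m: "cartesian A D m" and d: "is_ntrans A D d" and "NTcod d = NTdom m"
    and md: "cartesian A D (m \<bullet> d)"
  shows "cartesian A D d"
  unfolding cartesian_def
proof (intro conjI ballI)
  show "is_ntrans A D d" by (fact d)
  show "is_pullback D (Far (NTcod d) u) (NTmap d (Cod A u)) (NTmap d (Dom A u)) (Far (NTdom d) u)"
    if u: "u \<in> Arr A" for u
  proof -
    have "is_pullback D (Far (NTdom m) u) (NTmap d (Cod A u)) (NTmap d (Dom A u)) (Far (NTdom d) u)"
    proof (rule pullback_cancel[OF cartesian_pullback[OF m u]])
      show "is_pullback D (Far (NTcod m) u) (NTmap m (Cod A u) \<cdot> NTmap d (Cod A u))
          (NTmap m (Dom A u) \<cdot> NTmap d (Dom A u)) (Far (NTdom d) u)"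
        using cartesian_pullback[OF md u] u by simp
      show "Far (NTdom m) u \<cdot> NTmap d (Dom A u) = NTmap d (Cod A u) \<cdot> Far (NTdom d) u"
        using ntrans_naturality[OF d u] assms(3) by simp
      show "NTmap d (Dom A u) \<in> hom D (Dom D (Far (NTdom d) u)) (Dom D (NTmap m (Dom A u)))"
        "NTmap d (Cod A u) \<in> hom D (Cod D (Far (NTdom d) u)) (Dom D (NTmap m (Cod A u)))"
        using ntrans_component_in_hom[OF d] ntrans_component_in_hom[OF cartesian_is_ntrans[OF m]]
          functor_Far_in_hom[OF ntrans_dom_functor[OF d] u] u assms(3)
        by (auto simp: in_hom_iff)
    qed
    then show ?thesis
      using assms(3) by simp
  qed
qed

lemma iso_CartNt_component:
  assumes "iso (CartNt A D) \<alpha>" "x \<in> Obj A"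
  shows "iso D (NTmap \<alpha> x)"
proof -
  obtain \<beta> where \<alpha>: "cartesian A D \<alpha>" and \<beta>: "cartesian A D \<beta>" "NTdom \<beta> = NTcod \<alpha>"
      "NTcod \<beta> = NTdom \<alpha>"
    and inv: "\<beta> \<bullet> \<alpha> = Id (CartNt A D) (NTdom \<alpha>)" "\<alpha> \<bullet> \<beta> = Id (CartNt A D) (NTcod \<alpha>)"
    using assms(1) unfolding iso_def hom_def by auto
  show ?thesis
  proof (rule isoI)
    show "NTmap \<alpha> x \<in> hom D (Fob (NTdom \<alpha>) x) (Fob (NTcod \<alpha>) x)"
      "NTmap \<beta> x \<in> hom D (Fob (NTcod \<alpha>) x) (Fob (NTdom \<alpha>) x)"
      using ntrans_component_in_hom[OF cartesian_is_ntrans] \<alpha> \<beta> assms(2) by metis+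
    show "NTmap \<beta> x \<cdot> NTmap \<alpha> x = Id D (Fob (NTdom \<alpha>) x)"
      "NTmap \<alpha> x \<cdot> NTmap \<beta> x = Id D (Fob (NTcod \<alpha>) x)"
      using inv[THEN arg_cong, of "\<lambda>\<gamma>. NTmap \<gamma> x"] assms(2) by simp_all
  qed
qed

lemma componentwise_vcomp:
  assumes K: "\<And>f g. f \<in> K \<Longrightarrow> g \<in> K \<Longrightarrow> Cod D f = Dom D g \<Longrightarrow> g \<cdot> f \<in> K"
    and "\<alpha> \<in> componentwise A D K" "\<beta> \<in> componentwise A D K" "NTcod \<alpha> = NTdom \<beta>"
  shows "\<beta> \<bullet> \<alpha> \<in> componentwise A D K"
proof -
  have "NTmap \<beta> x \<cdot> NTmap \<alpha> x \<in> K" if "x \<in> Obj A" for x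
    using K assms(2-4) that ntrans_component_in_hom[of A D \<alpha> x] ntrans_component_in_hom[of A D \<beta> x]
    unfolding componentwise_def by (auto simp: in_hom_iff)
  then show ?thesis
    using vcomp_is_ntrans assms(2-4) unfolding componentwise_def by auto
qed

end

section \<open>Lifting problems in the functor category\<close>

locale diagrams_fs = diagrams D A + factorization_system D E M
  for D :: "('o,'a,'z) cat_scheme" (structure) and A :: "('p,'b,'y) cat_scheme" and E M

locale lifting_problem = diagrams_fs D A E M
  for D :: "('o,'a,'z) cat_scheme" (structure) and A :: "('p,'b,'y) cat_scheme" and E M +
  fixes e m f g :: "('p,'b,'o,'a) ntrans"
  assumes e: "e \<in> componentwise A D E" and m: "m \<in> componentwise A D M"
    and f: "is_ntrans A D f" "NTdom f = NTdom e" "NTcod f = NTdom m"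
    and g: "is_ntrans A D g" "NTdom g = NTcod e" "NTcod g = NTcod m"
    and commutes: "g \<bullet> e = m \<bullet> f"
begin

lemma e_ntrans: "is_ntrans A D e" and m_ntrans: "is_ntrans A D m"
  and e_component: "x \<in> Obj A \<Longrightarrow> NTmap e x \<in> E" and m_component: "x \<in> Obj A \<Longrightarrow> NTmap m x \<in> M"
  using e m unfolding componentwise_def by auto

lemma components_in_hom:
  assumes "x \<in> Obj A"
  shows "NTmap e x \<in> hom D (Fob (NTdom e) x) (Fob (NTcod e) x)"
    "NTmap m x \<in> hom D (Fob (NTdom m) x) (Fob (NTcod m) x)"
    "NTmap f x \<in> hom D (Fob (NTdom e) x) (Fob (NTdom m) x)"
    "NTmap g x \<in> hom D (Fob (NTcod e) x) (Fob (NTcod m) x)"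
  using ntrans_component_in_hom[OF e_ntrans assms] ntrans_component_in_hom[OF m_ntrans assms]
    ntrans_component_in_hom[OF f(1) assms] ntrans_component_in_hom[OF g(1) assms] f(2,3) g(2,3)
  by simp_all

lemma component_diagonal:
  assumes x: "x \<in> Obj A"
  shows "\<exists>!\<delta>. \<delta> \<in> hom D (Fob (NTcod e) x) (Fob (NTdom m) x) \<and>
    \<delta> \<cdot> NTmap e x = NTmap f x \<and> NTmap m x \<cdot> \<delta> = NTmap g x"
proof (rule diagonal[OF e_component[OF x] m_component[OF x] components_in_hom[OF x]])
  show "NTmap g x \<cdot> NTmap e x = NTmap m x \<cdot> NTmap f x"
    using commutes[THEN arg_cong, of "\<lambda>\<gamma>. NTmap \<gamma> x"] x by simp
qed

definition diag :: "('p,'b,'o,'a) ntrans"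
  where "diag = \<lparr>NTdom = NTcod e, NTcod = NTdom m, NTmap = \<lambda>x. if x \<in> Obj A
    then THE \<delta>. \<delta> \<in> hom D (Fob (NTcod e) x) (Fob (NTdom m) x) \<and>
      \<delta> \<cdot>\<^bsub>D\<^esub> NTmap e x = NTmap f x \<and> NTmap m x \<cdot>\<^bsub>D\<^esub> \<delta> = NTmap g x
    else undefined\<rparr>"

lemma diag_component:
  assumes "x \<in> Obj A"
  shows "NTmap diag x \<in> hom D (Fob (NTcod e) x) (Fob (NTdom m) x)"
    and "NTmap diag x \<cdot> NTmap e x = NTmap f x" and "NTmap m x \<cdot> NTmap diag x = NTmap g x"
  using theI'[OF component_diagonal[OF assms]] assms unfolding diag_def by simp_all

lemma diag_ntrans: "is_ntrans A D diag"
  unfolding is_ntrans_def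
proof (intro conjI ballI allI impI)
  show "is_functor A D (NTdom diag)" "is_functor A D (NTcod diag)"
    unfolding diag_def using e_ntrans m_ntrans by (simp_all add: ntrans_cod_functor ntrans_dom_functor)
  show "NTmap diag x \<in> hom D (Fob (NTdom diag) x) (Fob (NTcod diag) x)" if "x \<in> Obj A" for x
    using diag_component(1)[OF that] unfolding diag_def by simp
  show "NTmap diag x = undefined" if "x \<notin> Obj A" for x
    using that unfolding diag_def by simp
  show "Far (NTcod diag) u \<cdot> NTmap diag (Dom A u) = NTmap diag (Cod A u) \<cdot> Far (NTdom diag) u"
    if u: "u \<in> Arr A" for u
  proof -
    have "Far (NTdom m) u \<cdot> NTmap diag (Dom A u) = NTmap diag (Cod A u) \<cdot> Far (NTcod e) u"
    proof (rule diagonal_natural[OF e_component m_component])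
      show "Far (NTcod e) u \<cdot> NTmap e (Dom A u) = NTmap e (Cod A u) \<cdot> Far (NTdom e) u"
        "Far (NTcod m) u \<cdot> NTmap m (Dom A u) = NTmap m (Cod A u) \<cdot> Far (NTdom m) u"
        "Far (NTdom m) u \<cdot> NTmap f (Dom A u) = NTmap f (Cod A u) \<cdot> Far (NTdom e) u"
        "Far (NTcod m) u \<cdot> NTmap g (Dom A u) = NTmap g (Cod A u) \<cdot> Far (NTcod e) u"
        using ntrans_naturality[OF e_ntrans u] ntrans_naturality[OF m_ntrans u]
          ntrans_naturality[OF f(1) u] ntrans_naturality[OF g(1) u] f(2,3) g(2,3) by simp_all
      show "Far (NTdom e) u \<in> hom D (Fob (NTdom e) (Dom A u)) (Fob (NTdom e) (Cod A u))"
        "Far (NTcod e) u \<in> hom D (Fob (NTcod e) (Dom A u)) (Fob (NTcod e) (Cod A u))"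
        "Far (NTdom m) u \<in> hom D (Fob (NTdom m) (Dom A u)) (Fob (NTdom m) (Cod A u))"
        "Far (NTcod m) u \<in> hom D (Fob (NTcod m) (Dom A u)) (Fob (NTcod m) (Cod A u))"
        by (simp_all add: functor_Far_in_hom[OF _ u] ntrans_cod_functor ntrans_dom_functor e_ntrans m_ntrans)
    qed (use u components_in_hom diag_component in simp_all)
    then show ?thesis
      unfolding diag_def by simp
  qed
qed

lemma diag_commutes: "diag \<bullet> e = f" "m \<bullet> diag = g"
proof -
  show "diag \<bullet> e = f"
  proof (rule ntrans_eqI[OF vcomp_is_ntrans[OF e_ntrans diag_ntrans] f(1)])
    show "NTmap (diag \<bullet> e) x = NTmap f x" if "x \<in> Obj A" for x
      using diag_component(2)[OF that] that by simp
  qed (simp_all add: diag_def f(2,3))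
  show "m \<bullet> diag = g"
  proof (rule ntrans_eqI[OF vcomp_is_ntrans[OF diag_ntrans m_ntrans] g(1)])
    show "NTmap (m \<bullet> diag) x = NTmap g x" if "x \<in> Obj A" for x
      using diag_component(3)[OF that] that by simp
  qed (simp_all add: diag_def g(2,3))
qed

lemma diag_unique:
  assumes d: "is_ntrans A D d" "NTdom d = NTcod e" "NTcod d = NTdom m" and "d \<bullet> e = f" "m \<bullet> d = g"
  shows "d = diag"
proof (rule ntrans_eqI[OF d(1) diag_ntrans])
  fix x assume x: "x \<in> Obj A"
  have "NTmap d x \<cdot> NTmap e x = NTmap f x" "NTmap m x \<cdot> NTmap d x = NTmap g x"
    using assms(4,5)[THEN arg_cong, of "\<lambda>\<gamma>. NTmap \<gamma> x"] x by simp_all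
  then show "NTmap d x = NTmap diag x"
    using component_diagonal[OF x] diag_component[OF x] ntrans_component_in_hom[OF d(1) x] d(2,3)
    by auto
qed (simp_all add: diag_def d(2,3))

end

context diagrams_fs
begin

lemma CartNt_diagonal:
  assumes "e \<in> componentwise A D E" "m \<in> componentwise A D M" and m_cartesian: "cartesian A D m"
    and f_hom: "f \<in> hom (CartNt A D) (NTdom e) (NTdom m)"
    and g_hom: "g \<in> hom (CartNt A D) (NTcod e) (NTcod m)" and "g \<bullet> e = m \<bullet> f"
  shows "\<exists>!d. d \<in> hom (CartNt A D) (NTcod e) (NTdom m) \<and> d \<bullet> e = f \<and> m \<bullet> d = g"
proof -
  have f': "is_ntrans A D f" "NTdom f = NTdom e" "NTcod f = NTdom m"
    and g': "cartesian A D g" "NTdom g = NTcod e" "NTcod g = NTcod m"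
    using f_hom g_hom cartesian_is_ntrans unfolding hom_def by auto
  interpret lifting_problem D A E M e m f g
    using assms(1,2,6) f' cartesian_is_ntrans[OF g'(1)] g'(2,3) by unfold_locales
  have "cartesian A D diag"
    using cartesian_right_cancel[OF m_cartesian diag_ntrans] diag_commutes(2) g'(1) by (simp add: diag_def)
  then have "diag \<in> hom (CartNt A D) (NTcod e) (NTdom m)"
    unfolding hom_def diag_def by simp
  with diag_commutes show ?thesis
  proof (intro ex1I[of _ diag] conjI)
    show "d = diag" if "d \<in> hom (CartNt A D) (NTcod e) (NTdom m) \<and> d \<bullet> e = f \<and> m \<bullet> d = g" for d
      by (rule diag_unique) (use that in \<open>auto simp: hom_def intro: cartesian_is_ntrans\<close>)
  qed
qed

lemma iso_CartNt_componentwise: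
  assumes "iso (CartNt A D) \<alpha>"
  shows "\<alpha> \<in> componentwise A D E \<inter> {\<alpha>. cartesian A D \<alpha>}"
    and "\<alpha> \<in> componentwise A D M \<inter> {\<alpha>. cartesian A D \<alpha>}"
proof -
  have "cartesian A D \<alpha>"
    using assms unfolding iso_def by simp
  then show "\<alpha> \<in> componentwise A D E \<inter> {\<alpha>. cartesian A D \<alpha>}"
    "\<alpha> \<in> componentwise A D M \<inter> {\<alpha>. cartesian A D \<alpha>}"
    using cartesian_is_ntrans iso_CartNt_component[OF assms] iso_in_E iso_in_M
    unfolding componentwise_def by simp_all
qed

end

section \<open>Cartesian transformations over a terminal object\<close>

locale terminal_diagrams = diagrams D A
  for D :: "('o,'a,'z) cat_scheme" (structure) and A :: "('p,'b,'y) cat_scheme" +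
  fixes t :: 'p
  assumes terminal: "terminal A t"
begin

definition bang :: "'p \<Rightarrow> 'b"
  where "bang x = (THE u. u \<in> hom A x t)"

lemma terminal_in_Obj: "t \<in> Obj A"
  using terminal unfolding terminal_def by blast

lemma bang_in_hom: "x \<in> Obj A \<Longrightarrow> bang x \<in> hom A x t"
  using terminal theI'[of "\<lambda>u. u \<in> hom A x t"] unfolding terminal_def bang_def by blast

lemma bang_unique: "u \<in> hom A x t \<Longrightarrow> u = bang x"
  using terminal bang_in_hom unfolding terminal_def by (metis A.in_hom_iff A.dom_in_Obj)

lemma bang_comp: "v \<in> Arr A \<Longrightarrow> bang (Cod A v) \<cdot>\<^bsub>A\<^esub> v = bang (Dom A v)"
  using bang_in_hom[of "Cod A v"] by (intro bang_unique) (auto simp: A.in_hom_iff)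

lemma cartesian_pullback_bang:
  assumes "cartesian A D \<alpha>" "x \<in> Obj A"
  shows "is_pullback D (Far (NTcod \<alpha>) (bang x)) (NTmap \<alpha> t) (NTmap \<alpha> x) (Far (NTdom \<alpha>) (bang x))"
  using cartesian_pullback[OF assms(1), of "bang x"] bang_in_hom[OF assms(2)] by (simp add: A.in_hom_iff)

end

locale stable_fs_diagrams = terminal_diagrams D A t + diagrams_fs D A E M +
  stable_factorization_system D E M
  for D :: "('o,'a,'z) cat_scheme" (structure) and A :: "('p,'b,'y) cat_scheme" and t E M +
  assumes has_pullbacks: "has_pullbacks D"
begin

lemma cartesian_in_componentwise_E_iff:
  assumes "cartesian A D \<alpha>"
  shows "\<alpha> \<in> componentwise A D E \<longleftrightarrow> NTmap \<alpha> t \<in> E"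
  using E_pullback_stable[OF pullback_sym[OF cartesian_pullback_bang[OF assms]]]
    cartesian_is_ntrans[OF assms] terminal_in_Obj
  unfolding componentwise_def by blast

lemma cartesian_in_componentwise_M_iff:
  assumes "cartesian A D \<alpha>"
  shows "\<alpha> \<in> componentwise A D M \<longleftrightarrow> NTmap \<alpha> t \<in> M"
  using M_pullback_stable[OF pullback_sym[OF cartesian_pullback_bang[OF assms]]]
    cartesian_is_ntrans[OF assms] terminal_in_Obj
  unfolding componentwise_def by blast

end

section \<open>Factorization of a cartesian transformation\<close>

locale cartesian_factorization = stable_fs_diagrams D A t E M
  for D :: "('o,'a,'z) cat_scheme" (structure) and A :: "('p,'b,'y) cat_scheme" and t E M +
  fixes \<phi> :: "('p,'b,'o,'a) ntrans" and e0 m0 :: 'a and I :: 'o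
  assumes \<phi>_cartesian: "cartesian A D \<phi>"
    and e0: "e0 \<in> E" "e0 \<in> hom D (Fob (NTdom \<phi>) t) I"
    and m0: "m0 \<in> M" "m0 \<in> hom D I (Fob (NTcod \<phi>) t)"
    and factors_at_terminal: "m0 \<cdot> e0 = NTmap \<phi> t"
begin

abbreviation Src where "Src \<equiv> NTdom \<phi>"
abbreviation Tgt where "Tgt \<equiv> NTcod \<phi>"

lemma \<phi>_ntrans: "is_ntrans A D \<phi>"
  and Src_functor: "is_functor A D Src"
  and Tgt_functor: "is_functor A D Tgt"
  using cartesian_is_ntrans[OF \<phi>_cartesian] ntrans_dom_functor ntrans_cod_functor by blast+

lemma Src_bang: "x \<in> Obj A \<Longrightarrow> Far Src (bang x) \<in> hom D (Fob Src x) (Fob Src t)"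
  and Tgt_bang: "x \<in> Obj A \<Longrightarrow> Far Tgt (bang x) \<in> hom D (Fob Tgt x) (Fob Tgt t)"
  using functor_Far_in_hom[OF Src_functor] functor_Far_in_hom[OF Tgt_functor] bang_in_hom
  by (fastforce simp: A.in_hom_iff)+

definition pb_pair :: "'p \<Rightarrow> 'a \<times> 'a"
  where "pb_pair x = (SOME pq. is_pullback D (Far Tgt (bang x)) m0 (fst pq) (snd pq))"

definition m_at :: "'p \<Rightarrow> 'a" where "m_at x = fst (pb_pair x)"
definition k_at :: "'p \<Rightarrow> 'a" where "k_at x = snd (pb_pair x)"
definition P :: "'p \<Rightarrow> 'o" where "P x = Dom D (m_at x)"

lemma pullback_m0: "x \<in> Obj A \<Longrightarrow> is_pullback D (Far Tgt (bang x)) m0 (m_at x) (k_at x)"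
proof -
  assume "x \<in> Obj A"
  then have "\<exists>p1 p2. is_pullback D (Far Tgt (bang x)) m0 p1 p2"
    using has_pullbacks Tgt_bang m0(2) unfolding has_pullbacks_def by (simp add: in_hom_iff)
  then have "\<exists>pq. is_pullback D (Far Tgt (bang x)) m0 (fst pq) (snd pq)"
    by simp
  then show ?thesis
    unfolding m_at_def k_at_def pb_pair_def by (rule someI_ex)
qed

lemma m_at_in_hom: "x \<in> Obj A \<Longrightarrow> m_at x \<in> hom D (P x) (Fob Tgt x)"
  and k_at_in_hom: "x \<in> Obj A \<Longrightarrow> k_at x \<in> hom D (P x) I"
  using pullbackD[OF pullback_m0] Tgt_bang m0(2) unfolding P_def by (auto simp: in_hom_iff)

lemma P_in_Obj: "x \<in> Obj A \<Longrightarrow> P x \<in> Obj D"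
  using m_at_in_hom dom_in_Obj by (metis in_hom_iff)

lemma m_at_k_at_square: "x \<in> Obj A \<Longrightarrow> Far Tgt (bang x) \<cdot> m_at x = m0 \<cdot> k_at x"
  using pullbackD(5)[OF pullback_m0] .

definition P_arr :: "'b \<Rightarrow> 'a"
  where "P_arr v = (SOME h. h \<in> hom D (P (Dom A v)) (P (Cod A v)) \<and>
    m_at (Cod A v) \<cdot>\<^bsub>D\<^esub> h = Far Tgt v \<cdot>\<^bsub>D\<^esub> m_at (Dom A v) \<and>
    k_at (Cod A v) \<cdot>\<^bsub>D\<^esub> h = k_at (Dom A v))"

lemma P_arr:
  assumes v: "v \<in> Arr A"
  shows "P_arr v \<in> hom D (P (Dom A v)) (P (Cod A v))"
    and "m_at (Cod A v) \<cdot> P_arr v = Far Tgt v \<cdot> m_at (Dom A v)"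
    and "k_at (Cod A v) \<cdot> P_arr v = k_at (Dom A v)"
proof -
  define x y where "x = Dom A v" and "y = Cod A v"
  have xy: "x \<in> Obj A" "y \<in> Obj A"
    using v unfolding x_def y_def by simp_all
  have Tv: "Far Tgt v \<in> hom D (Fob Tgt x) (Fob Tgt y)"
    using functor_Far_in_hom[OF Tgt_functor v] unfolding x_def y_def .
  have "Far Tgt (bang y) \<cdot> Far Tgt v \<cdot> m_at x = Far Tgt (bang y \<cdot>\<^bsub>A\<^esub> v) \<cdot> m_at x"
    using comp_assoc_hom[OF m_at_in_hom[OF xy(1)] Tv Tgt_bang[OF xy(2)]] bang_in_hom[OF xy(2)] v
      functor_comp[OF Tgt_functor v] unfolding y_def by (simp add: A.in_hom_iff)
  also have "\<dots> = m0 \<cdot> k_at x"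
    using bang_comp[OF v] m_at_k_at_square[OF xy(1)] unfolding x_def y_def by simp
  finally have comm: "Far Tgt (bang y) \<cdot> Far Tgt v \<cdot> m_at x = m0 \<cdot> k_at x" .
  from pullback_lift[OF pullback_m0[OF xy(2)] m_at_in_hom[OF xy(2)] k_at_in_hom[OF xy(2)]
      comp_in_hom[OF m_at_in_hom[OF xy(1)] Tv] k_at_in_hom[OF xy(1)] comm]
  have "\<exists>h. h \<in> hom D (P x) (P y) \<and> m_at y \<cdot> h = Far Tgt v \<cdot> m_at x \<and> k_at y \<cdot> h = k_at x"
    by blast
  from someI_ex[OF this]
  show "P_arr v \<in> hom D (P (Dom A v)) (P (Cod A v))"
    and "m_at (Cod A v) \<cdot> P_arr v = Far Tgt v \<cdot> m_at (Dom A v)"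
    and "k_at (Cod A v) \<cdot> P_arr v = k_at (Dom A v)"
    unfolding P_arr_def x_def y_def by simp_all
qed

lemma P_arr_unique:
  assumes v: "v \<in> Arr A" and h: "h \<in> hom D (P (Dom A v)) (P (Cod A v))"
    and "m_at (Cod A v) \<cdot> h = Far Tgt v \<cdot> m_at (Dom A v)" "k_at (Cod A v) \<cdot> h = k_at (Dom A v)"
  shows "h = P_arr v"
  using pullback_jointly_monic[OF pullback_m0 m_at_in_hom h P_arr(1)[OF v]] P_arr(2,3)[OF v]
    assms(3,4) v by simp

definition mid :: "('p,'b,'o,'a) fnctr"
  where "mid = \<lparr>Fob = \<lambda>x. if x \<in> Obj A then P x else undefined,
    Far = \<lambda>v. if v \<in> Arr A then P_arr v else undefined\<rparr>"

lemma mid_functor: "is_functor A D mid"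
  unfolding is_functor_def
proof (intro conjI ballI allI impI)
  show "Fob mid x \<in> Obj D" if "x \<in> Obj A" for x
    using P_in_Obj[OF that] that unfolding mid_def by simp
  show "Far mid u \<in> hom D (Fob mid (Dom A u)) (Fob mid (Cod A u))" if "u \<in> Arr A" for u
    using P_arr(1)[OF that] that unfolding mid_def by simp
  show "Far mid (Id A x) = Id D (Fob mid x)" if x: "x \<in> Obj A" for x
  proof -
    have "Id D (P x) = P_arr (Id A x)"
      using P_arr_unique[of "Id A x" "Id D (P x)"] m_at_in_hom[OF x] k_at_in_hom[OF x]
        functor_id[OF Tgt_functor x] P_in_Obj[OF x] x by (simp add: in_hom_iff)
    then show ?thesis
      using x unfolding mid_def by simp
  qed
  show "Far mid (v \<cdot>\<^bsub>A\<^esub> u) = Far mid v \<cdot> Far mid u"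
    if u: "u \<in> Arr A" and v: "v \<in> Arr A" and uv: "Cod A u = Dom A v" for u v
  proof -
    have homs: "P_arr u \<in> hom D (P (Dom A u)) (P (Dom A v))" "P_arr v \<in> hom D (P (Dom A v)) (P (Cod A v))"
      "Far Tgt u \<in> hom D (Fob Tgt (Dom A u)) (Fob Tgt (Dom A v))"
      "Far Tgt v \<in> hom D (Fob Tgt (Dom A v)) (Fob Tgt (Cod A v))"
      using P_arr(1)[OF u] P_arr(1)[OF v] functor_Far_in_hom[OF Tgt_functor u]
        functor_Far_in_hom[OF Tgt_functor v] uv by simp_all
    have "m_at (Cod A v) \<cdot> P_arr v \<cdot> P_arr u = (Far Tgt v \<cdot> Far Tgt u) \<cdot> m_at (Dom A u)"
      using comm_square_paste[OF homs m_at_in_hom m_at_in_hom m_at_in_hom] P_arr(2)[OF u] P_arr(2)[OF v]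
        u v uv by simp
    moreover have "k_at (Cod A v) \<cdot> P_arr v \<cdot> P_arr u = k_at (Dom A u)"
      using comp_assoc_hom[OF homs(1,2) k_at_in_hom] P_arr(3)[OF u] P_arr(3)[OF v] u v uv by simp
    ultimately have "P_arr v \<cdot> P_arr u = P_arr (v \<cdot>\<^bsub>A\<^esub> u)"
      using P_arr_unique[of "v \<cdot>\<^bsub>A\<^esub> u"] homs(1,2) functor_comp[OF Tgt_functor u v uv] u v uv
      by auto
    then show ?thesis
      using u v uv unfolding mid_def by simp
  qed
qed (simp_all add: mid_def)

definition m_nt :: "('p,'b,'o,'a) ntrans"
  where "m_nt = \<lparr>NTdom = mid, NTcod = Tgt, NTmap = \<lambda>x. if x \<in> Obj A then m_at x else undefined\<rparr>"

lemma m_nt_ntrans: "is_ntrans A D m_nt"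
  unfolding is_ntrans_def
proof (intro conjI ballI allI impI)
  show "is_functor A D (NTdom m_nt)" "is_functor A D (NTcod m_nt)"
    unfolding m_nt_def using mid_functor Tgt_functor by simp_all
  show "NTmap m_nt x \<in> hom D (Fob (NTdom m_nt) x) (Fob (NTcod m_nt) x)" if "x \<in> Obj A" for x
    using m_at_in_hom[OF that] that unfolding m_nt_def mid_def by simp
  show "Far (NTcod m_nt) u \<cdot> NTmap m_nt (Dom A u) = NTmap m_nt (Cod A u) \<cdot> Far (NTdom m_nt) u"
    if "u \<in> Arr A" for u
    using P_arr(2)[OF that] that unfolding m_nt_def mid_def by simp
qed (simp add: m_nt_def)

lemma m_nt_cartesian: "cartesian A D m_nt"
  unfolding cartesian_def
proof (intro conjI ballI)
  show "is_ntrans A D m_nt" by (fact m_nt_ntrans)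
  fix u assume u: "u \<in> Arr A"
  define x y where "x = Dom A u" and "y = Cod A u"
  have xy: "x \<in> Obj A" "y \<in> Obj A"
    using u unfolding x_def y_def by simp_all
  have outer: "is_pullback D m0 (Far Tgt (bang y) \<cdot> Far Tgt u) (k_at y \<cdot> P_arr u) (m_at x)"
    using pullback_sym[OF pullback_m0[OF xy(1)]] P_arr(3)[OF u] bang_comp[OF u]
      functor_comp[OF Tgt_functor u, of "bang y"] bang_in_hom[OF xy(2)]
    unfolding x_def y_def by (simp add: A.in_hom_iff)
  have "is_pullback D (m_at y) (Far Tgt u) (P_arr u) (m_at x)"
  proof (rule pullback_cancel[OF pullback_sym[OF pullback_m0[OF xy(2)]] outer])
    show "m_at y \<cdot> P_arr u = Far Tgt u \<cdot> m_at x"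
      using P_arr(2)[OF u] unfolding x_def y_def .
    show "P_arr u \<in> hom D (Dom D (m_at x)) (Dom D (k_at y))"
      "Far Tgt u \<in> hom D (Cod D (m_at x)) (Dom D (Far Tgt (bang y)))"
      using P_arr(1)[OF u] functor_Far_in_hom[OF Tgt_functor u] m_at_in_hom[OF xy(1)]
        k_at_in_hom[OF xy(2)] Tgt_bang[OF xy(2)]
      unfolding x_def y_def by (auto simp: in_hom_iff)
  qed
  then show "is_pullback D (Far (NTcod m_nt) u) (NTmap m_nt (Cod A u)) (NTmap m_nt (Dom A u))
      (Far (NTdom m_nt) u)"
    using pullback_sym xy u unfolding m_nt_def mid_def x_def y_def by simp
qed

lemma m_nt_componentwise_M: "m_nt \<in> componentwise A D M"
  using M_pullback_stable[OF pullback_sym[OF pullback_m0] m0(1)] m_nt_ntrans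
  unfolding componentwise_def m_nt_def by simp

definition e_at :: "'p \<Rightarrow> 'a"
  where "e_at x = (SOME h. h \<in> hom D (Fob Src x) (P x) \<and> m_at x \<cdot>\<^bsub>D\<^esub> h = NTmap \<phi> x \<and>
    k_at x \<cdot>\<^bsub>D\<^esub> h = e0 \<cdot>\<^bsub>D\<^esub> Far Src (bang x))"

lemma e_at:
  assumes x: "x \<in> Obj A"
  shows "e_at x \<in> hom D (Fob Src x) (P x)" and "m_at x \<cdot> e_at x = NTmap \<phi> x"
    and "k_at x \<cdot> e_at x = e0 \<cdot> Far Src (bang x)"
proof -
  have "Far Tgt (bang x) \<cdot> NTmap \<phi> x = NTmap \<phi> t \<cdot> Far Src (bang x)"
    using ntrans_naturality[OF \<phi>_ntrans, of "bang x"] bang_in_hom[OF x] by (simp add: A.in_hom_iff)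
  also have "\<dots> = m0 \<cdot> e0 \<cdot> Far Src (bang x)"
    using comp_assoc_hom[OF Src_bang[OF x] e0(2) m0(2)] factors_at_terminal by simp
  finally have comm: "Far Tgt (bang x) \<cdot> NTmap \<phi> x = m0 \<cdot> e0 \<cdot> Far Src (bang x)" .
  from pullback_lift[OF pullback_m0[OF x] m_at_in_hom[OF x] k_at_in_hom[OF x]
      ntrans_component_in_hom[OF \<phi>_ntrans x] comp_in_hom[OF Src_bang[OF x] e0(2)] comm]
  have "\<exists>h. h \<in> hom D (Fob Src x) (P x) \<and> m_at x \<cdot> h = NTmap \<phi> x \<and>
      k_at x \<cdot> h = e0 \<cdot> Far Src (bang x)"
    by blast
  from someI_ex[OF this]
  show "e_at x \<in> hom D (Fob Src x) (P x)" and "m_at x \<cdot> e_at x = NTmap \<phi> x"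
    and "k_at x \<cdot> e_at x = e0 \<cdot> Far Src (bang x)"
    unfolding e_at_def by simp_all
qed

definition e_nt :: "('p,'b,'o,'a) ntrans"
  where "e_nt = \<lparr>NTdom = Src, NTcod = mid, NTmap = \<lambda>x. if x \<in> Obj A then e_at x else undefined\<rparr>"

lemma e_at_natural:
  assumes u: "u \<in> Arr A"
  shows "P_arr u \<cdot> e_at (Dom A u) = e_at (Cod A u) \<cdot> Far Src u"
proof -
  define x y where "x = Dom A u" and "y = Cod A u"
  have xy: "x \<in> Obj A" "y \<in> Obj A"
    using u unfolding x_def y_def by simp_all
  note homs = e_at(1)[OF xy(1)] e_at(1)[OF xy(2)] m_at_in_hom[OF xy(2)] k_at_in_hom[OF xy(2)]
    P_arr(1)[OF u, folded x_def y_def] functor_Far_in_hom[OF Src_functor u, folded x_def y_def]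
    functor_Far_in_hom[OF Tgt_functor u, folded x_def y_def] m_at_in_hom[OF xy(1)]
  show ?thesis
    unfolding x_def[symmetric] y_def[symmetric]
  proof (rule pullback_jointly_monic[OF pullback_m0[OF xy(2)] m_at_in_hom[OF xy(2)]])
    show "P_arr u \<cdot> e_at x \<in> hom D (Fob Src x) (P y)" "e_at y \<cdot> Far Src u \<in> hom D (Fob Src x) (P y)"
      using homs by auto
    have "m_at y \<cdot> P_arr u \<cdot> e_at x = Far Tgt u \<cdot> m_at x \<cdot> e_at x"
      using comp_assoc_hom[OF homs(1,5,3)] comp_assoc_hom[OF homs(1,8,7)] P_arr(2)[OF u]
      unfolding x_def y_def by simp
    also have "\<dots> = m_at y \<cdot> e_at y \<cdot> Far Src u"
      using comp_assoc_hom[OF homs(6,2,3)] ntrans_naturality[OF \<phi>_ntrans u] e_at(2) xy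
      unfolding x_def y_def by simp
    finally show "m_at y \<cdot> P_arr u \<cdot> e_at x = m_at y \<cdot> e_at y \<cdot> Far Src u" .
    have "k_at y \<cdot> P_arr u \<cdot> e_at x = e0 \<cdot> Far Src (bang x)"
      using comp_assoc_hom[OF homs(1,5,4)] P_arr(3)[OF u] e_at(3)[OF xy(1)]
      unfolding x_def y_def by simp
    also have "\<dots> = e0 \<cdot> Far Src (bang y) \<cdot> Far Src u"
      using bang_comp[OF u] functor_comp[OF Src_functor u, of "bang y"] bang_in_hom[OF xy(2)]
      unfolding x_def y_def by (simp add: A.in_hom_iff)
    also have "\<dots> = k_at y \<cdot> e_at y \<cdot> Far Src u"
      using comp_assoc_hom[OF homs(6) Src_bang[OF xy(2)] e0(2)] comp_assoc_hom[OF homs(6,2,4)]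
        e_at(3)[OF xy(2)] by simp
    finally show "k_at y \<cdot> P_arr u \<cdot> e_at x = k_at y \<cdot> e_at y \<cdot> Far Src u" .
  qed
qed

lemma e_nt_ntrans: "is_ntrans A D e_nt"
  unfolding is_ntrans_def
proof (intro conjI ballI allI impI)
  show "is_functor A D (NTdom e_nt)" "is_functor A D (NTcod e_nt)"
    unfolding e_nt_def using mid_functor Src_functor by simp_all
  show "NTmap e_nt x \<in> hom D (Fob (NTdom e_nt) x) (Fob (NTcod e_nt) x)" if "x \<in> Obj A" for x
    using e_at(1)[OF that] that unfolding e_nt_def mid_def by simp
  show "Far (NTcod e_nt) u \<cdot> NTmap e_nt (Dom A u) = NTmap e_nt (Cod A u) \<cdot> Far (NTdom e_nt) u"
    if "u \<in> Arr A" for u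
    using e_at_natural[OF that] that unfolding e_nt_def mid_def by simp
qed (simp add: e_nt_def)

lemma m_nt_vcomp_e_nt: "m_nt \<bullet> e_nt = \<phi>"
proof (rule ntrans_eqI[OF vcomp_is_ntrans[OF e_nt_ntrans m_nt_ntrans] \<phi>_ntrans])
  show "NTmap (m_nt \<bullet> e_nt) x = NTmap \<phi> x" if "x \<in> Obj A" for x
    using e_at(2)[OF that] that unfolding m_nt_def e_nt_def by simp
qed (simp_all add: m_nt_def e_nt_def)

lemma e_nt_cartesian: "cartesian A D e_nt"
  using cartesian_right_cancel[OF m_nt_cartesian e_nt_ntrans] m_nt_vcomp_e_nt \<phi>_cartesian
  unfolding m_nt_def e_nt_def by simp

lemma e_nt_componentwise_E: "e_nt \<in> componentwise A D E"
proof -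
  have "e_at x \<in> E" if x: "x \<in> Obj A" for x
  proof -
    have "is_pullback D (k_at x) e0 (e_at x) (Far Src (bang x))"
    proof (rule pullback_cancel[OF pullback_m0[OF x]])
      show "is_pullback D (Far Tgt (bang x)) (m0 \<cdot> e0) (m_at x \<cdot> e_at x) (Far Src (bang x))"
        using cartesian_pullback_bang[OF \<phi>_cartesian x] factors_at_terminal e_at(2)[OF x] by simp
      show "k_at x \<cdot> e_at x = e0 \<cdot> Far Src (bang x)"
        by (fact e_at(3)[OF x])
      show "e_at x \<in> hom D (Dom D (Far Src (bang x))) (Dom D (m_at x))"
        "e0 \<in> hom D (Cod D (Far Src (bang x))) (Dom D m0)"
        using e_at(1)[OF x] Src_bang[OF x] m_at_in_hom[OF x] e0(2) m0(2) by (auto simp: in_hom_iff)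
    qed
    then show ?thesis
      using E_pullback_stable[OF pullback_sym] e0(1) by blast
  qed
  then show ?thesis
    using e_nt_ntrans unfolding componentwise_def e_nt_def by simp
qed

end

context stable_fs_diagrams
begin

lemma cartesian_factorization_exists:
  assumes \<phi>: "cartesian A D \<phi>"
  obtains e m where "e \<in> componentwise A D E" "cartesian A D e" "m \<in> componentwise A D M"
    "cartesian A D m" "NTcod e = NTdom m" "m \<bullet> e = \<phi>"
proof -
  have "NTmap \<phi> t \<in> hom D (Fob (NTdom \<phi>) t) (Fob (NTcod \<phi>) t)"
    using ntrans_component_in_hom[OF cartesian_is_ntrans[OF \<phi>] terminal_in_Obj] .
  moreover obtain e0 m0 where em: "e0 \<in> E" "m0 \<in> M" "Cod D e0 = Dom D m0" "m0 \<cdot> e0 = NTmap \<phi> t"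
    using factorization calculation by (metis in_hom_iff)
  moreover have "Dom D e0 = Dom D (m0 \<cdot> e0)" "Cod D m0 = Cod D (m0 \<cdot> e0)"
    using em(1-3) E_in_Arr M_in_Arr by simp_all
  ultimately have "e0 \<in> hom D (Fob (NTdom \<phi>) t) (Cod D e0)" "m0 \<in> hom D (Cod D e0) (Fob (NTcod \<phi>) t)"
    using em E_in_Arr M_in_Arr by (auto simp: in_hom_iff)
  then interpret cartesian_factorization D A t E M \<phi> e0 m0 "Cod D e0"
    using em \<phi> by unfold_locales auto
  show thesis
    by (rule that[OF e_nt_componentwise_E e_nt_cartesian m_nt_componentwise_M m_nt_cartesian _
          m_nt_vcomp_e_nt]) (simp add: e_nt_def m_nt_def)
qed

lemma ofs_CartNt_componentwise:
  "ofs (CartNt A D) (componentwise A D E \<inter> {\<alpha>. cartesian A D \<alpha>})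
    (componentwise A D M \<inter> {\<alpha>. cartesian A D \<alpha>})" (is "ofs _ ?E ?M")
proof (rule ofsI)
  show "?E \<subseteq> Arr (CartNt A D)" "?M \<subseteq> Arr (CartNt A D)"
    by auto
  show "\<alpha> \<in> ?E" "\<alpha> \<in> ?M" if "iso (CartNt A D) \<alpha>" for \<alpha>
    using iso_CartNt_componentwise[OF that] by simp_all
  show "\<beta> \<bullet> \<alpha> \<in> ?E" if "\<alpha> \<in> ?E" "\<beta> \<in> ?E" "Cod (CartNt A D) \<alpha> = Dom (CartNt A D) \<beta>" for \<alpha> \<beta>
  proof -
    have c: "\<alpha> \<in> componentwise A D E" "\<beta> \<in> componentwise A D E" "NTcod \<alpha> = NTdom \<beta>"
      "cartesian A D \<alpha>" "cartesian A D \<beta>"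
      using that by simp_all
    show ?thesis
      using componentwise_vcomp[OF E_comp c(1-3)] cartesian_vcomp[OF c(4,5,3)] by blast
  qed
  show "\<beta> \<bullet> \<alpha> \<in> ?M" if "\<alpha> \<in> ?M" "\<beta> \<in> ?M" "Cod (CartNt A D) \<alpha> = Dom (CartNt A D) \<beta>" for \<alpha> \<beta>
  proof -
    have c: "\<alpha> \<in> componentwise A D M" "\<beta> \<in> componentwise A D M" "NTcod \<alpha> = NTdom \<beta>"
      "cartesian A D \<alpha>" "cartesian A D \<beta>"
      using that by simp_all
    show ?thesis
      using componentwise_vcomp[OF M_comp c(1-3)] cartesian_vcomp[OF c(4,5,3)] by blast
  qed
  show "\<exists>!d. d \<in> hom (CartNt A D) (Cod (CartNt A D) e) (Dom (CartNt A D) m) \<and> d \<bullet> e = f \<and> m \<bullet> d = g"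
    if "e \<in> ?E" "m \<in> ?M" "f \<in> hom (CartNt A D) (Dom (CartNt A D) e) (Dom (CartNt A D) m)"
      "g \<in> hom (CartNt A D) (Cod (CartNt A D) e) (Cod (CartNt A D) m)" "g \<bullet> e = m \<bullet> f" for e m f g
    using CartNt_diagonal that by simp
  show "\<exists>e\<in>?E. \<exists>m\<in>?M. Cod (CartNt A D) e = Dom (CartNt A D) m \<and> m \<bullet> e = \<phi>"
    if "\<phi> \<in> Arr (CartNt A D)" for \<phi>
  proof -
    have "cartesian A D \<phi>"
      using that by simp
    then obtain e m where "e \<in> componentwise A D E" "cartesian A D e" "m \<in> componentwise A D M"
      "cartesian A D m" "NTcod e = NTdom m" "m \<bullet> e = \<phi>"
      by (rule cartesian_factorization_exists)
    then show ?thesis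
      by auto
  qed
qed

end

theorem proposition4p9:
  fixes A :: "('p,'b) cat" and D :: "('o,'a) cat"
    and E M :: "'a set" and t :: 'p
  assumes "category D" and "has_pullbacks D" and "stable_ofs D E M"
    and "category A" and "terminal A t"
  defines "E' \<equiv> {e. is_ntrans A D e \<and> NTmap e t \<in> E}"
    and "M' \<equiv> {m. cartesian A D m \<and> NTmap m t \<in> M}"
    and "Cart \<equiv> {\<alpha>. cartesian A D \<alpha>}"
  shows "ofs (CartNt A D) (E' \<inter> Cart) (M' \<inter> Cart)
       \<and> ofs (CartNt A D) (componentwise A D E \<inter> Cart) (componentwise A D M \<inter> Cart)
       \<and> E' \<inter> Cart = componentwise A D E \<inter> Cart
       \<and> M' \<inter> Cart = componentwise A D M \<inter> Cart"
proof -
  interpret stable_fs_diagrams D A t E M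
    using assms(1-5) unfolding stable_ofs_def by unfold_locales blast+
  have E'_eq: "E' \<inter> Cart = componentwise A D E \<inter> Cart"
    unfolding E'_def Cart_def by (auto simp: cartesian_in_componentwise_E_iff cartesian_is_ntrans)
  have M'_eq: "M' \<inter> Cart = componentwise A D M \<inter> Cart"
    unfolding M'_def Cart_def by (auto simp: cartesian_in_componentwise_M_iff)
  show ?thesis
    using ofs_CartNt_componentwise E'_eq M'_eq unfolding Cart_def by simp
qed

end
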